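(* Let $k\ge 2$. Every undirected graph $G$ whose acyclic chromatic number is at most $k$ satisfies $\chi_p(G)\le k\cdot 2^{k-2}$.
   Context: An acyclic $k$-coloring of an undirected simple graph is a proper vertex coloring with $k$ colors such that the subgraph induced by any two color classes is a forest; the acyclic chromatic number is the least such $k$. An oriented graph is a directed graph with no loops and no pair of opposite arcs; an orientation of $G$ is obtained by orienting each edge. A homomorphism of oriented graphs $\vec G\to\vec H$ is a vertex map sending every arc $uv$ to an arc $\varphi(u)\varphi(v)$. To push a vertex means to reverse all arcs incident with it; the push graph $[\vec G]$ is the set of oriented graphs obtainable from $\vec G$ by pushing some set of vertices (its presentations). $[\vec G]$ admits a homomorphism to $\vec H$ if some presentation does. The push chromatic number $\chi_p([\vec G])$ is the minimum number of vertices of an oriented graph $\vec H$ with $[\vec G]\to\vec H$, and $\chi_p(G)$ is the maximum of $\chi_p([\vec G])$ over all orientations $\vec G$ of $G$. *)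

theory Defs
  imports Main
begin

definition simple_graph :: "'a set \<Rightarrow> ('a \<times> 'a) set \<Rightarrow> bool" where
  "simple_graph V E \<longleftrightarrow> finite V \<and> E \<subseteq> V \<times> V \<and> sym E \<and> irrefl E"

definition is_cycle :: "('a \<times> 'a) set \<Rightarrow> 'a list \<Rightarrow> bool" where
  "is_cycle E xs \<longleftrightarrow> length xs \<ge> 3 \<and> distinct xs \<and>
     (\<forall>i < length xs. (xs ! i, xs ! ((i + 1) mod length xs)) \<in> E)"

definition induced_forest :: "('a \<times> 'a) set \<Rightarrow> 'a set \<Rightarrow> bool" where
  "induced_forest E U \<longleftrightarrow> \<not> (\<exists>xs. set xs \<subseteq> U \<and> is_cycle E xs)"

definition acyclic_coloring :: "'a set \<Rightarrow> ('a \<times> 'a) set \<Rightarrow> nat \<Rightarrow> ('a \<Rightarrow> nat) \<Rightarrow> bool" where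
  "acyclic_coloring V E k c \<longleftrightarrow>
     c ` V \<subseteq> {..<k} \<and>
     (\<forall>(u, v) \<in> E. c u \<noteq> c v) \<and>
     (\<forall>i j. induced_forest E {v \<in> V. c v = i \<or> c v = j})"

definition acyclic_chromatic_number :: "'a set \<Rightarrow> ('a \<times> 'a) set \<Rightarrow> nat" where
  "acyclic_chromatic_number V E = (LEAST k. \<exists>c. acyclic_coloring V E k c)"

definition oriented_graph :: "'b set \<Rightarrow> ('b \<times> 'b) set \<Rightarrow> bool" where
  "oriented_graph W B \<longleftrightarrow> B \<subseteq> W \<times> W \<and> (\<forall>(u, v) \<in> B. (v, u) \<notin> B)"

definition orientation :: "('a \<times> 'a) set \<Rightarrow> ('a \<times> 'a) set \<Rightarrow> bool" where
  "orientation E A \<longleftrightarrow> A \<subseteq> E \<and> (\<forall>(u, v) \<in> E. (u, v) \<in> A \<or> (v, u) \<in> A) \<and>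
     (\<forall>(u, v) \<in> A. (v, u) \<notin> A)"

text \<open>Pushing the set of vertices S: an arc is reversed iff exactly one endpoint lies in S
  (reversing the arcs at each pushed vertex in turn).\<close>
definition push :: "'a set \<Rightarrow> ('a \<times> 'a) set \<Rightarrow> ('a \<times> 'a) set" where
  "push S A = {(u, v). ((u, v) \<in> A \<and> (u \<in> S \<longleftrightarrow> v \<in> S)) \<or> ((v, u) \<in> A \<and> \<not> (u \<in> S \<longleftrightarrow> v \<in> S))}"

definition oriented_hom :: "'a set \<Rightarrow> ('a \<times> 'a) set \<Rightarrow> 'b set \<Rightarrow> ('b \<times> 'b) set \<Rightarrow> ('a \<Rightarrow> 'b) \<Rightarrow> bool" where
  "oriented_hom V A W B f \<longleftrightarrow> f ` V \<subseteq> W \<and> (\<forall>(u, v) \<in> A. (f u, f v) \<in> B)"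

definition push_hom :: "'a set \<Rightarrow> ('a \<times> 'a) set \<Rightarrow> 'b set \<Rightarrow> ('b \<times> 'b) set \<Rightarrow> bool" where
  "push_hom V A W B \<longleftrightarrow> (\<exists>S \<subseteq> V. \<exists>f. oriented_hom V (push S A) W B f)"

text \<open>Push chromatic number of a push graph; target oriented graphs are taken on natural-number
  vertices (every finite oriented graph is isomorphic to one of these).\<close>
definition push_chromatic_number_or :: "'a set \<Rightarrow> ('a \<times> 'a) set \<Rightarrow> nat" where
  "push_chromatic_number_or V A =
     (LEAST n. \<exists>(W :: nat set) B. finite W \<and> card W = n \<and> oriented_graph W B \<and> push_hom V A W B)"

definition push_chromatic_number :: "'a set \<Rightarrow> ('a \<times> 'a) set \<Rightarrow> nat" where
  "push_chromatic_number V E = Max {push_chromatic_number_or V A | A. orientation E A}"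

end

theory Submission
  imports Defs
begin

text \<open>Fix an acyclic colouring \<open>c\<close> with \<open>k\<close> colours and an orientation. On every edge compare
  the direction of the arc with the order of the colours of its ends. Each bichromatic subgraph is
  a forest, so this comparison can be written as \<open>x u = x v\<close> for a 2-labelling \<open>x\<close> of that forest;
  vertex \<open>v\<close> thus carries one bit for every other colour. Pushing \<open>v\<close> flips all its bits, so
  after pushing we may normalise the bit towards one reference colour. The colour of \<open>v\<close> together
  with its remaining \<open>k - 2\<close> bits determines the direction of every arc, which gives a
  homomorphism to a fixed oriented graph on \<open>k \<cdot> 2\<^sup>k\<^sup>-\<^sup>2\<close> vertices.\<close>

definition walk :: "('a \<times> 'a) set \<Rightarrow> 'a list \<Rightarrow> bool" where
  "walk E xs \<longleftrightarrow> (\<forall>i. Suc i < length xs \<longrightarrow> (xs ! i, xs ! Suc i) \<in> E)"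

lemma walk_Cons:
  assumes "walk E xs" "xs \<noteq> []" "(w, hd xs) \<in> E"
  shows "walk E (w # xs)"
  unfolding walk_def
proof (intro allI impI)
  fix i assume "Suc i < length (w # xs)"
  then show "((w # xs) ! i, (w # xs) ! Suc i) \<in> E"
    using assms by (cases i) (auto simp: walk_def hd_conv_nth)
qed

lemma is_cycle_take_walk:
  assumes "walk E xs" "distinct xs" "p < length xs" "2 \<le> p" "(xs ! p, xs ! 0) \<in> E"
  shows "is_cycle E (take (Suc p) xs)"
  unfolding is_cycle_def
proof (intro conjI allI impI)
  show "3 \<le> length (take (Suc p) xs)" "distinct (take (Suc p) xs)" using assms by simp_all
  fix i assume "i < length (take (Suc p) xs)"
  then have "i \<le> p" using assms by simp
  then show "(take (Suc p) xs ! i, take (Suc p) xs ! ((i + 1) mod length (take (Suc p) xs))) \<in> E"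
    using assms unfolding walk_def by (cases "i = p") simp_all
qed

text \<open>A neighbour of the head other than its successor cannot lie on the path: it would close a
  cycle.\<close>
lemma induced_forest_extend_path:
  assumes "sym E" "irrefl E" "induced_forest E U" "xs \<noteq> []" "distinct xs" "set xs \<subseteq> U"
    "walk E xs" and two_nbrs: "\<forall>v\<in>U. \<exists>a\<in>U. \<exists>b\<in>U. a \<noteq> b \<and> (v, a) \<in> E \<and> (v, b) \<in> E"
  shows "\<exists>w\<in>U. w \<notin> set xs \<and> (w, hd xs) \<in> E"
proof -
  obtain h rest where xs: "xs = h # rest" using assms(4) by (cases xs) auto
  obtain a b where "a \<in> U" "b \<in> U" "a \<noteq> b" "(h, a) \<in> E" "(h, b) \<in> E"
    using two_nbrs xs assms(6) by auto
  then obtain w where w: "w \<in> U" "(h, w) \<in> E" "rest \<noteq> [] \<longrightarrow> w \<noteq> xs ! 1" by metis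
  have "w \<noteq> h" using w assms(2) by (auto simp: irrefl_def)
  have "w \<notin> set xs"
  proof
    assume "w \<in> set xs"
    then obtain p where p: "p < length xs" "xs ! p = w" by (auto simp: in_set_conv_nth)
    have "p \<noteq> 0" using p \<open>w \<noteq> h\<close> xs by (cases p) auto
    moreover have "p \<noteq> 1" using p w xs by auto
    ultimately have "is_cycle E (take (Suc p) xs)"
      using assms p w xs by (intro is_cycle_take_walk) (auto simp: sym_def)
    moreover have "set (take (Suc p) xs) \<subseteq> U" using assms(6) set_take_subset by fastforce
    ultimately show False using assms(3) unfolding induced_forest_def by blast
  qed
  then show ?thesis using w xs assms(1) by (auto simp: sym_def)
qed

lemma induced_forest_has_leaf:
  assumes "finite U" "U \<noteq> {}" "sym E" "irrefl E" "induced_forest E U"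
  shows "\<exists>v\<in>U. \<forall>a\<in>U. \<forall>b\<in>U. (v, a) \<in> E \<longrightarrow> (v, b) \<in> E \<longrightarrow> a = b"
proof (rule ccontr)
  assume "\<not> ?thesis"
  then have two_nbrs: "\<forall>v\<in>U. \<exists>a\<in>U. \<exists>b\<in>U. a \<noteq> b \<and> (v, a) \<in> E \<and> (v, b) \<in> E" by blast
  have "\<exists>xs. length xs = Suc n \<and> distinct xs \<and> set xs \<subseteq> U \<and> walk E xs" for n
  proof (induction n)
    case 0
    from assms(2) obtain v where "v \<in> U" by blast
    then show ?case by (intro exI[of _ "[v]"]) (auto simp: walk_def)
  next
    case (Suc n)
    then obtain xs where xs: "length xs = Suc n" "distinct xs" "set xs \<subseteq> U" "walk E xs" by blast
    then have "xs \<noteq> []" by auto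
    with xs obtain w where "w \<in> U" "w \<notin> set xs" "(w, hd xs) \<in> E"
      using induced_forest_extend_path[OF assms(3,4,5)] two_nbrs by blast
    then show ?case using xs \<open>xs \<noteq> []\<close> walk_Cons by (intro exI[of _ "w # xs"]) simp
  qed
  then obtain xs where xs: "length xs = Suc (card U)" "distinct xs" "set xs \<subseteq> U" by blast
  then have "card (set xs) \<le> card U" using assms(1) by (simp add: card_mono)
  then show False using xs distinct_card by fastforce
qed

lemma edge_labelling_extend_leaf:
  fixes x :: "'a \<Rightarrow> bool"
  assumes tsym: "\<forall>u v. (u, v) \<in> E \<longrightarrow> \<tau> u v = \<tau> v u" and "irrefl E" "sym E"
    and leaf: "\<forall>a\<in>U. \<forall>b\<in>U. (v, a) \<in> E \<longrightarrow> (v, b) \<in> E \<longrightarrow> a = b"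
    and x: "\<forall>u\<in>U - {v}. \<forall>w\<in>U - {v}. (u, w) \<in> E \<longrightarrow> \<tau> u w = (x u = x w)"
  shows "\<exists>x'::'a \<Rightarrow> bool. \<forall>u\<in>U. \<forall>w\<in>U. (u, w) \<in> E \<longrightarrow> \<tau> u w = (x' u = x' w)"
proof (cases "\<exists>w\<in>U. (v, w) \<in> E")
  case True
  then obtain w where w: "w \<in> U" "(v, w) \<in> E" by blast
  have "w \<noteq> v" using w(2) assms(2) by (auto simp: irrefl_def)
  define x' where "x' = x(v := (\<tau> v w = x w))"
  have "\<forall>a\<in>U. \<forall>b\<in>U. (a, b) \<in> E \<longrightarrow> \<tau> a b = (x' a = x' b)"
  proof (intro ballI impI)
    fix a b assume ab: "a \<in> U" "b \<in> U" "(a, b) \<in> E"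
    have "(b, a) \<in> E" using ab(3) assms(3) by (auto simp: sym_def)
    then have "a = v \<Longrightarrow> b = w" and "b = v \<Longrightarrow> a = w"
      using leaf ab w by blast+
    moreover have "\<tau> a b = \<tau> b a" using tsym ab(3) by blast
    moreover have "a \<noteq> v \<Longrightarrow> b \<noteq> v \<Longrightarrow> \<tau> a b = (x a = x b)" using x ab by blast
    ultimately show "\<tau> a b = (x' a = x' b)"
      using \<open>w \<noteq> v\<close> unfolding x'_def by (cases "a = v"; cases "b = v") auto
  qed
  then show ?thesis by (rule exI[of _ x'])
next
  case False
  have "\<forall>u\<in>U. \<forall>w\<in>U. (u, w) \<in> E \<longrightarrow> u \<noteq> v \<and> w \<noteq> v"
    using False assms(3) by (auto simp: sym_def)
  then have "\<forall>u\<in>U. \<forall>w\<in>U. (u, w) \<in> E \<longrightarrow> \<tau> u w = (x u = x w)" using x by simp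
  then show ?thesis by (rule exI[of _ x])
qed

lemma induced_forest_edge_labelling:
  assumes "finite U" "sym E" "irrefl E" "induced_forest E U"
    and tsym: "\<forall>u v. (u, v) \<in> E \<longrightarrow> \<tau> u v = \<tau> v u"
  shows "\<exists>x::'a \<Rightarrow> bool. \<forall>u\<in>U. \<forall>v\<in>U. (u, v) \<in> E \<longrightarrow> \<tau> u v = (x u = x v)"
  using assms(1,4)
proof (induction "card U" arbitrary: U rule: less_induct)
  case less
  show ?case
  proof (cases "U = {}")
    case False
    then obtain v where v: "v \<in> U"
      and leaf: "\<forall>a\<in>U. \<forall>b\<in>U. (v, a) \<in> E \<longrightarrow> (v, b) \<in> E \<longrightarrow> a = b"
      using induced_forest_has_leaf[OF less.prems(1) _ assms(2,3) less.prems(2)] by blast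
    have "finite (U - {v})" "induced_forest E (U - {v})"
      using less.prems unfolding induced_forest_def by auto
    from less.hyps[OF card_Diff1_less[OF less.prems(1) v] this] obtain x :: "'a \<Rightarrow> bool"
      where "\<forall>u\<in>U - {v}. \<forall>w\<in>U - {v}. (u, w) \<in> E \<longrightarrow> \<tau> u w = (x u = x w)" ..
    then show ?thesis by (rule edge_labelling_extend_leaf[OF tsym assms(3,2) leaf])
  qed simp
qed

lemma oriented_graph_image:
  assumes "inj_on h W" "oriented_graph W B"
  shows "oriented_graph (h ` W) (map_prod h h ` B)"
  unfolding oriented_graph_def
proof (intro conjI ballI)
  show "map_prod h h ` B \<subseteq> h ` W \<times> h ` W" using assms(2) by (auto simp: oriented_graph_def)
  fix p assume "p \<in> map_prod h h ` B"
  then obtain a b where ab: "(a, b) \<in> B" and p: "p = (h a, h b)" by auto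
  have "(h b, h a) \<notin> map_prod h h ` B"
  proof
    assume "(h b, h a) \<in> map_prod h h ` B"
    then obtain a' b' where ab': "(a', b') \<in> B" "h b = h a'" "h a = h b'" by auto
    then have "a' = b" "b' = a"
      using ab assms unfolding oriented_graph_def by (auto dest: inj_onD)
    then show False using ab ab' assms(2) unfolding oriented_graph_def by auto
  qed
  then show "case p of (u, v) \<Rightarrow> (v, u) \<notin> map_prod h h ` B" using p by simp
qed

lemma push_hom_image:
  assumes "push_hom V A W B"
  shows "push_hom V A (h ` W) (map_prod h h ` B)"
proof -
  obtain S f where "S \<subseteq> V" and f: "oriented_hom V (push S A) W B f"
    using assms by (auto simp: push_hom_def)
  have "oriented_hom V (push S A) (h ` W) (map_prod h h ` B) (h \<circ> f)"
    using f unfolding oriented_hom_def by force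
  with \<open>S \<subseteq> V\<close> show ?thesis unfolding push_hom_def by blast
qed

lemma push_chromatic_number_or_le_card:
  assumes "finite W" "oriented_graph W B" "push_hom V A W B"
  shows "push_chromatic_number_or V A \<le> card W"
proof -
  obtain h where h: "bij_betw h W {0..<card W}" using ex_bij_betw_finite_nat[OF assms(1)] by blast
  then have "inj_on h W" by (simp add: bij_betw_def)
  then have "finite (h ` W) \<and> card (h ` W) = card W \<and>
      oriented_graph (h ` W) (map_prod h h ` B) \<and> push_hom V A (h ` W) (map_prod h h ` B)"
    using assms by (simp add: card_image oriented_graph_image push_hom_image)
  then have "\<exists>(W' :: nat set) B'. finite W' \<and> card W' = card W \<and> oriented_graph W' B' \<and> push_hom V A W' B'"
    by blast
  then show ?thesis unfolding push_chromatic_number_or_def by (rule Least_le)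
qed

lemma acyclic_coloring_inj:
  assumes "simple_graph V E" "inj_on c V" "c ` V \<subseteq> {..<n}"
  shows "acyclic_coloring V E n c"
  unfolding acyclic_coloring_def
proof (intro conjI allI ballI)
  show "c ` V \<subseteq> {..<n}" by (fact assms(3))
  fix p assume "p \<in> E"
  then show "case p of (u, v) \<Rightarrow> c u \<noteq> c v"
    using assms(1,2) by (auto simp: simple_graph_def irrefl_def dest: inj_onD)
next
  fix i j
  show "induced_forest E {v \<in> V. c v = i \<or> c v = j}"
    unfolding induced_forest_def
  proof
    assume "\<exists>xs. set xs \<subseteq> {v \<in> V. c v = i \<or> c v = j} \<and> is_cycle E xs"
    then obtain xs where xs: "set xs \<subseteq> {v \<in> V. c v = i \<or> c v = j}" "is_cycle E xs" by blast
    have "card (set xs) \<le> card {i, j}"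
      using xs(1) inj_on_subset[OF assms(2)] by (intro card_inj_on_le) auto
    also have "\<dots> \<le> 2" by (simp add: card_insert_le_m1)
    finally show False using xs(2) by (simp add: is_cycle_def distinct_card)
  qed
qed

lemma acyclic_coloring_mono:
  "acyclic_coloring V E k c \<Longrightarrow> k \<le> k' \<Longrightarrow> acyclic_coloring V E k' c"
  unfolding acyclic_coloring_def by (meson lessThan_subset_iff order_trans)

lemma acyclic_coloring_exists:
  assumes "simple_graph V E" "acyclic_chromatic_number V E \<le> k"
  shows "\<exists>c. acyclic_coloring V E k c"
proof -
  obtain h where "bij_betw h V {0..<card V}"
    using ex_bij_betw_finite_nat assms(1) by (auto simp: simple_graph_def)
  then have "acyclic_coloring V E (card V) h"
    using assms(1) by (intro acyclic_coloring_inj) (auto simp: bij_betw_def)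
  then have "\<exists>c. acyclic_coloring V E (acyclic_chromatic_number V E) c"
    unfolding acyclic_chromatic_number_def
    using LeastI[of "\<lambda>k. \<exists>c. acyclic_coloring V E k c" "card V"] by blast
  then show ?thesis using acyclic_coloring_mono[OF _ assms(2)] by (elim exE) (rule exI)
qed

lemma orientation_exists:
  assumes "simple_graph V E"
  shows "\<exists>A. orientation E A"
proof -
  obtain h where "bij_betw h V {0..<card V}"
    using ex_bij_betw_finite_nat assms by (auto simp: simple_graph_def)
  then have "inj_on h V" by (simp add: bij_betw_def)
  have "h u \<noteq> h v" if "(u, v) \<in> E" for u v
    using that assms \<open>inj_on h V\<close> by (auto simp: simple_graph_def irrefl_def dest: inj_onD)
  then have "orientation E {(u, v) \<in> E. h u < h v}"
    using assms unfolding orientation_def simple_graph_def sym_def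
    by (auto simp: linorder_neq_iff)
  then show ?thesis ..
qed

lemma finite_orientations: "finite E \<Longrightarrow> finite {A. orientation E A}"
  by (rule finite_subset[of _ "Pow E"]) (auto simp: orientation_def)

text \<open>A vertex \<open>(i, s)\<close> of the target is a colour \<open>i\<close> together with the set \<open>s\<close> of colours \<open>j\<close>
  whose bit differs from the bit towards \<open>reference_colour i\<close>; that colour (any colour other
  than \<open>i\<close> would do) is excluded because pushing makes its bit constant.\<close>
definition reference_colour :: "nat \<Rightarrow> nat" where
  "reference_colour i = (if i = 0 then 1 else 0)"

definition push_target :: "nat \<Rightarrow> (nat \<times> nat set) set" where
  "push_target k = Sigma {..<k} (\<lambda>i. Pow ({..<k} - {i, reference_colour i}))"

definition push_target_arcs :: "nat \<Rightarrow> ((nat \<times> nat set) \<times> (nat \<times> nat set)) set" where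
  "push_target_arcs k = {((i, s), (j, t)). (i, s) \<in> push_target k \<and> (j, t) \<in> push_target k \<and>
     i \<noteq> j \<and> (i < j \<longleftrightarrow> (j \<in> s \<longleftrightarrow> i \<in> t))}"

lemma finite_push_target: "finite (push_target k)"
  unfolding push_target_def by auto

lemma card_push_target:
  assumes "2 \<le> k"
  shows "card (push_target k) = k * 2 ^ (k - 2)"
proof -
  have "card (Pow ({..<k} - {i, reference_colour i})) = 2 ^ (k - 2)" if "i < k" for i
  proof -
    have "{i, reference_colour i} \<subseteq> {..<k}" "card {i, reference_colour i} = 2"
      using that assms by (auto simp: reference_colour_def)
    then show ?thesis by (simp add: card_Pow card_Diff_subset)
  qed
  then show ?thesis unfolding push_target_def by (simp add: card_SigmaI)
qed

lemma oriented_graph_push_target: "oriented_graph (push_target k) (push_target_arcs k)"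
  unfolding oriented_graph_def push_target_arcs_def by auto

lemma acyclic_coloring_orientation_bits:
  assumes "simple_graph V E" "acyclic_coloring V E k c" "orientation E A"
  shows "\<exists>Y :: 'a \<Rightarrow> nat \<Rightarrow> bool. \<forall>(u, v) \<in> A. (c u < c v) = (Y u (c v) = Y v (c u))"
proof -
  have fin: "finite V" and sy: "sym E" and irr: "irrefl E" and EV: "E \<subseteq> V \<times> V"
    using assms(1) by (auto simp: simple_graph_def)
  have proper: "\<And>u v. (u, v) \<in> E \<Longrightarrow> c u \<noteq> c v"
    and forest: "\<And>i j. induced_forest E {v \<in> V. c v = i \<or> c v = j}"
    using assms(2) by (auto simp: acyclic_coloring_def)
  have AE: "A \<subseteq> E" and orient: "\<And>u v. (u, v) \<in> E \<Longrightarrow> (u, v) \<in> A \<longleftrightarrow> (v, u) \<notin> A"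
    using assms(3) unfolding orientation_def by auto
  define \<tau> where "\<tau> u v = ((u, v) \<in> A \<longleftrightarrow> c u < c v)" for u v
  have \<tau>_sym: "\<tau> u v = \<tau> v u" if "(u, v) \<in> E" for u v
    using proper[OF that] orient[OF that] unfolding \<tau>_def by auto
  define U where "U i j = {v \<in> V. c v = i \<or> c v = j}" for i j
  have labelling: "\<exists>x :: 'a \<Rightarrow> bool. \<forall>u\<in>U i j. \<forall>v\<in>U i j. (u, v) \<in> E \<longrightarrow> \<tau> u v = (x u = x v)" for i j
    using fin sy irr forest \<tau>_sym unfolding U_def by (intro induced_forest_edge_labelling) auto
  define X where "X i j = (SOME x :: 'a \<Rightarrow> bool. \<forall>u\<in>U i j. \<forall>v\<in>U i j. (u, v) \<in> E \<longrightarrow> \<tau> u v = (x u = x v))" for i j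
  have X: "\<forall>u\<in>U i j. \<forall>v\<in>U i j. (u, v) \<in> E \<longrightarrow> \<tau> u v = (X i j u = X i j v)" for i j
    unfolding X_def by (rule someI_ex[OF labelling])
  define Y where "Y v j = X (min (c v) j) (max (c v) j) v" for v j
  have "\<forall>(u, v) \<in> A. (c u < c v) = (Y u (c v) = Y v (c u))"
  proof (intro ballI, clarify)
    fix u v assume uv: "(u, v) \<in> A"
    define i where "i = min (c u) (c v)"
    define j where "j = max (c u) (c v)"
    have "(u, v) \<in> E" using uv AE by blast
    moreover have "u \<in> U i j" "v \<in> U i j"
      using \<open>(u, v) \<in> E\<close> EV unfolding U_def i_def j_def by auto
    ultimately have "\<tau> u v = (X i j u = X i j v)" using X by blast
    moreover have "Y u (c v) = X i j u" "Y v (c u) = X i j v"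
      unfolding Y_def i_def j_def by (simp_all add: min.commute max.commute)
    ultimately show "(c u < c v) = (Y u (c v) = Y v (c u))" using uv unfolding \<tau>_def by simp
  qed
  then show ?thesis by (rule exI[of _ Y])
qed

lemma push_hom_push_target:
  fixes Y :: "'a \<Rightarrow> nat \<Rightarrow> bool"
  assumes "A \<subseteq> V \<times> V" "c ` V \<subseteq> {..<k}" and proper: "\<forall>(u, v) \<in> A. c u \<noteq> c v"
    and bits: "\<forall>(u, v) \<in> A. (c u < c v) = (Y u (c v) = Y v (c u))"
  shows "push_hom V A (push_target k) (push_target_arcs k)"
proof -
  define r where "r v = reference_colour (c v)" for v
  define S where "S = {v \<in> V. Y v (r v)}"
  txt \<open>In the presentation pushed at \<open>S\<close> the bit of \<open>v\<close> towards \<open>j\<close> becomes \<open>Y v j \<noteq> (v \<in> S)\<close>,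
    which vanishes for \<open>j = r v\<close>; \<open>f v\<close> records the others.\<close>
  define f where "f v = (c v, {j \<in> {..<k} - {c v, r v}. Y v j \<noteq> Y v (r v)})" for v
  have f_in: "f v \<in> push_target k" if "v \<in> V" for v
    using that assms(2) unfolding f_def r_def push_target_def by auto
  have mem: "(c v \<in> snd (f u)) = (Y u (c v) \<noteq> (u \<in> S))" if "u \<in> V" "v \<in> V" "c u \<noteq> c v" for u v
    using that assms(2) unfolding f_def S_def by auto
  have "(f u, f v) \<in> push_target_arcs k" if uv: "(u, v) \<in> push S A" for u v
  proof -
    have cases: "(u, v) \<in> A \<and> (u \<in> S \<longleftrightarrow> v \<in> S) \<or> (v, u) \<in> A \<and> \<not> (u \<in> S \<longleftrightarrow> v \<in> S)"
      using uv unfolding push_def by simp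
    then have "u \<in> V" "v \<in> V" "c u \<noteq> c v" using assms(1) proper by auto
    moreover have "(c u < c v) = ((c v \<in> snd (f u)) = (c u \<in> snd (f v)))"
      using cases
    proof
      assume "(u, v) \<in> A \<and> (u \<in> S \<longleftrightarrow> v \<in> S)"
      then show ?thesis using bits mem[of u v] mem[of v u] \<open>u \<in> V\<close> \<open>v \<in> V\<close> \<open>c u \<noteq> c v\<close> by auto
    next
      assume "(v, u) \<in> A \<and> \<not> (u \<in> S \<longleftrightarrow> v \<in> S)"
      then show ?thesis using bits mem[of u v] mem[of v u] \<open>u \<in> V\<close> \<open>v \<in> V\<close> \<open>c u \<noteq> c v\<close> by auto
    qed
    ultimately show ?thesis
      using f_in unfolding push_target_arcs_def by (auto simp: f_def)
  qed
  then have "oriented_hom V (push S A) (push_target k) (push_target_arcs k) f"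
    using f_in unfolding oriented_hom_def by auto
  moreover have "S \<subseteq> V" unfolding S_def by blast
  ultimately show ?thesis unfolding push_hom_def by blast
qed

theorem theorem3:
  fixes V :: "'a set" and E :: "('a \<times> 'a) set" and k :: nat
  assumes "k \<ge> 2"
    and "simple_graph V E"
    and "acyclic_chromatic_number V E \<le> k"
  shows "push_chromatic_number V E \<le> k * 2 ^ (k - 2)"
proof -
  obtain c where c: "acyclic_coloring V E k c" using acyclic_coloring_exists[OF assms(2,3)] by blast
  have bound: "push_chromatic_number_or V A \<le> k * 2 ^ (k - 2)" if A: "orientation E A" for A
  proof -
    obtain Y :: "'a \<Rightarrow> nat \<Rightarrow> bool" where "\<forall>(u, v) \<in> A. (c u < c v) = (Y u (c v) = Y v (c u))"
      using acyclic_coloring_orientation_bits[OF assms(2) c A] by blast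
    moreover have "A \<subseteq> V \<times> V" "c ` V \<subseteq> {..<k}" "\<forall>(u, v) \<in> A. c u \<noteq> c v"
      using A c assms(2) by (auto simp: orientation_def acyclic_coloring_def simple_graph_def)
    ultimately have "push_hom V A (push_target k) (push_target_arcs k)"
      by (intro push_hom_push_target)
    then have "push_chromatic_number_or V A \<le> card (push_target k)"
      by (rule push_chromatic_number_or_le_card[OF finite_push_target oriented_graph_push_target])
    then show ?thesis using card_push_target[OF assms(1)] by simp
  qed
  have "finite {A. orientation E A}"
    using assms(2) finite_subset by (intro finite_orientations) (auto simp: simple_graph_def)
  moreover have "{A. orientation E A} \<noteq> {}" using orientation_exists[OF assms(2)] by blast
  ultimately show ?thesis
    unfolding push_chromatic_number_def using bound by (intro Max.boundedI) auto
qed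

end
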